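(* In the quantum switch model of the context (with $W=\infty$), suppose $(\lambda_{ij}+\epsilon)_{i,j\in\mathcal K}\in\Lambda$ for some $\epsilon>0$, that Assumption 1 holds, and that an on-demand protocol is used. Let $S(t)$ be the event $\big\{\sum_{i\in\mathcal K}U_{ij}(t)\le E_{0j}(t)\ \forall j\in\mathcal K\big\}$ and $\overline S(t)$ its complement. Then there exists a constant $c_2$, independent of $t$, such that for all $t\ge1$ and all $i,j\in\mathcal K$, $$\mathbb E\Big[\sum_{\tau=0}^{t-1}A_{ij}(\tau)\,\Big|\,\overline S(t)\Big]\mathbb P[\overline S(t)]\le c_2 .$$
   Context: Quantum switch model. There are $K$ end nodes $\mathcal K=\{1,\dots,K\}$ and a switch (node $0$); time is slotted, $t=0,1,2,\dots$; pair-indexed quantities are symmetric in $(i,j)$. In slot $t$: (i) $C_{0i}(t)\in\{0,1\}$ EPR pairs are generated between the switch and node $i$, where $\{C_{0i}(t)\}_{t\ge0}$ are mutually independent Bernoulli processes (i.i.d. in $t$) with mean $p_i$. (ii) The switch chooses nonnegative integers $F_{ij}(t)=F_{ji}(t)$ (entanglement swaps for pair $(i,j)$, each consuming one stored switch–$i$ and one stored switch–$j$ pair) with $\sum_iF_{ij}(t)\le E_{0j}(t)$; no limit on swaps per slot ($W=\infty$); each swap succeeds independently with probability $q\in(0,1]$; $R_{ij}(t)$ is the number of successes. (iii) $A_{ij}(t)\in\mathbb N$ new requests for pair $(i,j)$ arrive. Dynamics: $U_{ij}(t+1)=[U_{ij}(t)-E_{ij}(t)-R_{ij}(t)]^++A_{ij}(t)$,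 $E_{ij}(t+1)=[E_{ij}(t)+R_{ij}(t)-U_{ij}(t)]^+$, $E_{0i}(t+1)=E_{0i}(t)-\sum_jF_{ij}(t)+C_{0i}(t)$, with zero initial values; $U_{ij}$ = pending requests, $E_{ij}$ = stored $i$–$j$ pairs, $E_{0i}$ = stored switch–$i$ pairs; memory unlimited, no decoherence. Requests: $\{A_{ij}(t)\}_t$ mutually independent across pairs, each stationary ergodic with rate $\lambda_{ij}$, and $\mathbb E[A_{ij}(t)^2\mid H(t)=h]\le A_{\max}^2$ for every $t,i,j$ and realization $h$ of the history $H(t)=(E_{ij}(\tau),U_{ij}(\tau),A_{ij}(\tau),R_{ij}(\tau),C_{0i}(\tau))_{\tau=0}^{t-1}$. $\Lambda$ is the set of nonnegative matrices $(\lambda_{ij})$ for which there exist nonnegative $f_{ij}=f_{ji}$ with $\sum_if_{ij}\le p_j$ for all $j$ and $\lambda_{ij}\le qf_{ij}$ for all $i,j$. Assumption 1: for every $\epsilon'>0$ there is a constant $c_1(\epsilon')$, independent of $t$, such that for all $t\ge1$ and all $i,j$, $\mathbb E\big[\sum_{\tau=0}^{t-1}A_{ij}(\tau)\,\big|\,B_1\big]\mathbb P[B_1]\le c_1(\epsilon')$, where $B_1$ is the event that $\big|\frac1t\sum_{\tau=0}^{t-1}A_{i'j'}(\tau)-\lambda_{i'j'}\big|>\epsilon'$ for some $i',j'$. On-demand protocols: in every slot $t$ the choices $F_{ij}=F_{ij}(t)$ satisfy $\sum_{i}F_{ij}\le E_{0j}(t)$ for all $j$; $F_{ij}\le U_{ij}(t)$;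 $F_{ij}=F_{ji}\in\mathbb N$; and $\big(E_{0i}(t)-\sum_kF_{ik}\big)\big(E_{0j}(t)-\sum_kF_{kj}\big)\big(U_{ij}(t)-F_{ij}\big)=0$ for all $i,j$. *)

theory Defs
  imports "HOL-Probability.Probability"
begin

text \<open>Quantum switch model. Nodes are 1..K. Pair-indexed processes are functions
  X i j t omega (slot t, outcome omega); node-indexed ones are C i t omega.\<close>

type_synonym 'a pproc = "nat \<Rightarrow> nat \<Rightarrow> nat \<Rightarrow> 'a \<Rightarrow> nat"

text \<open>Joint recursion for (U_ij(t), E_ij(t)); natural-number subtraction is the positive part.\<close>
primrec UE :: "'a pproc \<Rightarrow> 'a pproc \<Rightarrow> nat \<Rightarrow> nat \<Rightarrow> nat \<Rightarrow> 'a \<Rightarrow> nat \<times> nat" where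
  "UE A R i j 0 \<omega> = (0, 0)"
| "UE A R i j (Suc t) \<omega> =
     (fst (UE A R i j t \<omega>) - snd (UE A R i j t \<omega>) - R i j t \<omega> + A i j t \<omega>,
      snd (UE A R i j t \<omega>) + R i j t \<omega> - fst (UE A R i j t \<omega>))"

definition Ureq :: "'a pproc \<Rightarrow> 'a pproc \<Rightarrow> nat \<Rightarrow> nat \<Rightarrow> nat \<Rightarrow> 'a \<Rightarrow> nat" where
  "Ureq A R i j t \<omega> = fst (UE A R i j t \<omega>)"

definition Estore :: "'a pproc \<Rightarrow> 'a pproc \<Rightarrow> nat \<Rightarrow> nat \<Rightarrow> nat \<Rightarrow> 'a \<Rightarrow> nat" where
  "Estore A R i j t \<omega> = snd (UE A R i j t \<omega>)"

primrec E0 :: "(nat \<Rightarrow> nat \<Rightarrow> 'a \<Rightarrow> nat) \<Rightarrow> 'a pproc \<Rightarrow> nat \<Rightarrow> nat \<Rightarrow> nat \<Rightarrow> 'a \<Rightarrow> nat" where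
  "E0 C F K i 0 \<omega> = 0"
| "E0 C F K i (Suc t) \<omega> = E0 C F K i t \<omega> - (\<Sum>j\<in>{1..K}. F i j t \<omega>) + C i t \<omega>"

definition hist :: "nat \<Rightarrow> 'a pproc \<Rightarrow> 'a pproc \<Rightarrow> (nat \<Rightarrow> nat \<Rightarrow> 'a \<Rightarrow> nat) \<Rightarrow> nat \<Rightarrow> 'a
    \<Rightarrow> (nat \<Rightarrow> nat \<Rightarrow> nat \<Rightarrow> nat \<times> nat \<times> nat \<times> nat) \<times> (nat \<Rightarrow> nat \<Rightarrow> nat)" where
  "hist K A R C t \<omega> =
     ((\<lambda>\<tau> i j. if \<tau> < t \<and> i \<in> {1..K} \<and> j \<in> {1..K}
               then (Estore A R i j \<tau> \<omega>, Ureq A R i j \<tau> \<omega>, A i j \<tau> \<omega>, R i j \<tau> \<omega>)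
               else (0, 0, 0, 0)),
      (\<lambda>\<tau> i. if \<tau> < t \<and> i \<in> {1..K} then C i \<tau> \<omega> else 0))"

definition in_Lambda :: "nat \<Rightarrow> (nat \<Rightarrow> real) \<Rightarrow> real \<Rightarrow> (nat \<Rightarrow> nat \<Rightarrow> real) \<Rightarrow> bool" where
  "in_Lambda K p q l \<longleftrightarrow>
     (\<forall>i\<in>{1..K}. \<forall>j\<in>{1..K}. 0 \<le> l i j) \<and>
     (\<exists>f :: nat \<Rightarrow> nat \<Rightarrow> real.
        (\<forall>i\<in>{1..K}. \<forall>j\<in>{1..K}. 0 \<le> f i j \<and> f i j = f j i) \<and>
        (\<forall>j\<in>{1..K}. (\<Sum>i\<in>{1..K}. f i j) \<le> p j) \<and>
        (\<forall>i\<in>{1..K}. \<forall>j\<in>{1..K}. l i j \<le> q * f i j))"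

text \<open>On-demand constraints for one slot, given e0 j = E_0j(t), u i j = U_ij(t), f i j = F_ij(t).\<close>
definition on_demand :: "nat \<Rightarrow> (nat \<Rightarrow> nat) \<Rightarrow> (nat \<Rightarrow> nat \<Rightarrow> nat) \<Rightarrow> (nat \<Rightarrow> nat \<Rightarrow> nat) \<Rightarrow> bool" where
  "on_demand K e0 u f \<longleftrightarrow>
     (\<forall>j\<in>{1..K}. (\<Sum>i\<in>{1..K}. f i j) \<le> e0 j) \<and>
     (\<forall>i\<in>{1..K}. \<forall>j\<in>{1..K}. f i j \<le> u i j \<and> f i j = f j i) \<and>
     (\<forall>i\<in>{1..K}. \<forall>j\<in>{1..K}.
        (int (e0 i) - (\<Sum>k\<in>{1..K}. int (f i k))) * (int (e0 j) - (\<Sum>k\<in>{1..K}. int (f k j)))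
          * (int (u i j) - int (f i j)) = 0)"

definition seq_space :: "(nat \<Rightarrow> nat) measure" where
  "seq_space = PiM UNIV (\<lambda>_. count_space UNIV)"

definition stationary_proc :: "'a measure \<Rightarrow> (nat \<Rightarrow> 'a \<Rightarrow> nat) \<Rightarrow> bool" where
  "stationary_proc M X \<longleftrightarrow>
     (\<forall>k. distr M seq_space (\<lambda>\<omega> t. X (t + k) \<omega>) = distr M seq_space (\<lambda>\<omega> t. X t \<omega>))"

definition ergodic_proc :: "'a measure \<Rightarrow> (nat \<Rightarrow> 'a \<Rightarrow> nat) \<Rightarrow> bool" where
  "ergodic_proc M X \<longleftrightarrow>
     (\<forall>S\<in>sets seq_space. (\<forall>x. (\<lambda>t. x (Suc t)) \<in> S \<longleftrightarrow> x \<in> S) \<longrightarrow>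
        emeasure M {\<omega>\<in>space M. (\<lambda>t. X t \<omega>) \<in> S} \<in> {0, 1})"

definition B1 :: "'a measure \<Rightarrow> nat \<Rightarrow> 'a pproc \<Rightarrow> (nat \<Rightarrow> nat \<Rightarrow> real) \<Rightarrow> nat \<Rightarrow> real \<Rightarrow> 'a set" where
  "B1 M K A lam t e' = {\<omega>\<in>space M. \<exists>i\<in>{1..K}. \<exists>j\<in>{1..K}.
      \<bar>(\<Sum>\<tau><t. real (A i j \<tau> \<omega>)) / real t - lam i j\<bar> > e'}"

definition S_event :: "'a measure \<Rightarrow> nat \<Rightarrow> 'a pproc \<Rightarrow> 'a pproc \<Rightarrow> (nat \<Rightarrow> nat \<Rightarrow> 'a \<Rightarrow> nat)
    \<Rightarrow> 'a pproc \<Rightarrow> nat \<Rightarrow> 'a set" where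
  "S_event M K A R C F t = {\<omega>\<in>space M. \<forall>j\<in>{1..K}.
      (\<Sum>i\<in>{1..K}. Ureq A R i j t \<omega>) \<le> E0 C F K j t \<omega>}"

definition pairs :: "nat \<Rightarrow> (nat \<times> nat) set" where
  "pairs K = {(i, j). i \<in> {1..K} \<and> j \<in> {1..K} \<and> i \<le> j}"

end

theory Submission
  imports Defs
begin

(* Almost surely no swap fails (R <= F), so no i-j pair is ever stored, U_ij(t) is the number
   of arrivals minus successful swaps and E_0j(t) the number of generated minus consumed pairs.
   Outside the event B1 of Assumption 1, taken with e = eps/3, at most t (lam_ij + e) requests
   arrive.  If moreover every swap sum  sum_tau (R_ij - q F_ij)  and every generation sum
   sum_tau (C_j - p_j)  stays within e t of zero, the slack eps of the capacity region forces
   S(t).  Both kinds of sums have orthogonal increments (martingale differences, resp.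
   independent centred Bernoulli variables) with second moment at most t, so by Chebyshev a
   deviation of size e t has probability O(1/t), while outside B1 the arrivals are O(t).
   Hence the arrivals on the complement of S(t) contribute at most c1 + O(1). *)

lemma expectation_binomial_pmf_Suc:
  fixes f :: "nat \<Rightarrow> real"
  assumes "q \<in> {0..1}"
  shows "measure_pmf.expectation (binomial_pmf (Suc n) q) f =
    q * measure_pmf.expectation (binomial_pmf n q) (\<lambda>k. f (Suc k)) +
    (1 - q) * measure_pmf.expectation (binomial_pmf n q) f"
proof -
  have eq: "binomial_pmf (Suc n) q =
      bernoulli_pmf q \<bind> (\<lambda>b. map_pmf (\<lambda>k. (if b then 1 else 0) + k) (binomial_pmf n q))"
    using assms by (simp add: binomial_pmf_Suc map_pmf_def)
  show ?thesis
    unfolding eq using assms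
    by (subst pmf_expectation_bind[where A = UNIV])
      (use finite_set_pmf_binomial_pmf[of q n] in \<open>auto simp: UNIV_bool\<close>)
qed

lemma expectation_binomial_pmf_real:
  assumes "q \<in> {0..1}"
  shows "measure_pmf.expectation (binomial_pmf n q) real = n * q"
proof (induction n)
  case 0 then show ?case using assms by (simp add: binomial_pmf_0)
next
  case (Suc n)
  then show ?case using assms by (simp add: expectation_binomial_pmf_Suc algebra_simps)
qed

lemma expectation_binomial_pmf_centered_square:
  assumes "q \<in> {0..1}"
  shows "measure_pmf.expectation (binomial_pmf n q) (\<lambda>k. (real k - n * q)\<^sup>2) = n * q * (1 - q)"
proof (induction n)
  case 0 then show ?case using assms by (simp add: binomial_pmf_0)
next
  case (Suc n)
  have "(real (Suc k) - Suc n * q)\<^sup>2 =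
      (real k - n * q)\<^sup>2 + 2 * (1 - q) * (real k - n * q) + (1 - q)\<^sup>2" for k
    by (simp add: power2_eq_square algebra_simps)
  moreover have "(real k - Suc n * q)\<^sup>2 = (real k - n * q)\<^sup>2 - 2 * q * (real k - n * q) + q\<^sup>2" for k
    by (simp add: power2_eq_square algebra_simps)
  moreover have "measure_pmf.expectation (binomial_pmf n q) (\<lambda>k. real k - n * q) = 0"
    using assms by (simp add: expectation_binomial_pmf_real)
  ultimately show ?case using Suc assms
    by (simp add: expectation_binomial_pmf_Suc power2_eq_square algebra_simps)
qed

lemma nn_integral_binomial_pmf_eq_expectation:
  assumes "q \<in> {0..1}" "\<And>k. 0 \<le> f k"
  shows "(\<integral>\<^sup>+k. ennreal (f k) \<partial>binomial_pmf n q) =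
    ennreal (measure_pmf.expectation (binomial_pmf n q) f)"
  using assms by (intro nn_integral_eq_integral) auto

lemma borel_measurable_count_space_comp:
  "f \<in> M \<rightarrow>\<^sub>M count_space UNIV \<Longrightarrow> (\<lambda>x. g (f x)) \<in> borel_measurable M"
  by (rule measurable_compose[OF _ borel_measurable_count_space])

lemma nn_integral_mult_eq_on_subalgebra:
  fixes f g h :: "'a \<Rightarrow> ennreal"
  assumes N: "subalgebra M N"
    and f: "f \<in> borel_measurable M" and g: "g \<in> borel_measurable M"
    and eq: "\<And>B. B \<in> sets N \<Longrightarrow> (\<integral>\<^sup>+x\<in>B. f x \<partial>M) = (\<integral>\<^sup>+x\<in>B. g x \<partial>M)"
    and h: "h \<in> borel_measurable N"
  shows "(\<integral>\<^sup>+x. h x * f x \<partial>M) = (\<integral>\<^sup>+x. h x * g x \<partial>M)"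
proof -
  have sub: "subalgebra (density M u) N" for u
    using N by (simp add: subalgebra_def)
  have restr_eq: "restr_to_subalg (density M f) N = restr_to_subalg (density M g) N"
  proof (rule measure_eqI)
    fix B assume "B \<in> sets (restr_to_subalg (density M f) N)"
    then have B: "B \<in> sets N" using sets_restr_to_subalg[OF sub] by simp
    then have "B \<in> sets M" using N by (auto simp: subalgebra_def)
    then show "emeasure (restr_to_subalg (density M f) N) B =
        emeasure (restr_to_subalg (density M g) N) B"
      using eq[OF B] f g
      by (simp add: emeasure_restr_to_subalg[OF sub B] emeasure_density mult.commute)
  qed (simp add: sets_restr_to_subalg[OF sub])
  have hM: "h \<in> borel_measurable M"
    using measurable_from_subalg[OF N h] .
  have "(\<integral>\<^sup>+x. h x * f x \<partial>M) = (\<integral>\<^sup>+x. h x \<partial>restr_to_subalg (density M f) N)"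
    using f hM by (simp add: nn_integral_subalgebra2[OF sub h] nn_integral_density mult.commute)
  also have "\<dots> = (\<integral>\<^sup>+x. h x * g x \<partial>M)"
    using g hM
    by (simp add: restr_eq nn_integral_subalgebra2[OF sub h] nn_integral_density mult.commute)
  finally show ?thesis .
qed

lemma nn_integral_conditional_pmf:
  fixes X :: "'a \<Rightarrow> nat" and P :: "'a \<Rightarrow> nat pmf" and h :: "'a \<Rightarrow> nat \<Rightarrow> ennreal"
  assumes N: "subalgebra M N"
    and X: "X \<in> measurable M (count_space UNIV)"
    and P: "\<And>k. (\<lambda>\<omega>. pmf (P \<omega>) k) \<in> borel_measurable M"
    and law: "\<And>B k. B \<in> sets N \<Longrightarrow>
      emeasure M (B \<inter> {\<omega>\<in>space M. X \<omega> = k}) = (\<integral>\<^sup>+\<omega>\<in>B. pmf (P \<omega>) k \<partial>M)"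
    and h: "\<And>k. (\<lambda>\<omega>. h \<omega> k) \<in> borel_measurable N"
  shows "(\<integral>\<^sup>+\<omega>. h \<omega> (X \<omega>) \<partial>M) = (\<integral>\<^sup>+\<omega>. (\<integral>\<^sup>+k. h \<omega> k \<partial>P \<omega>) \<partial>M)"
proof -
  define S where "S k = {\<omega>\<in>space M. X \<omega> = k}" for k
  have S: "S k \<in> sets M" for k
    unfolding S_def using X by measurable
  have hM: "(\<lambda>\<omega>. h \<omega> k) \<in> borel_measurable M" for k
    using measurable_from_subalg[OF N h] .
  have "(\<integral>\<^sup>+\<omega>. h \<omega> (X \<omega>) \<partial>M) = (\<integral>\<^sup>+\<omega>. (\<Sum>k. h \<omega> k * indicator (S k) \<omega>) \<partial>M)"
  proof (rule nn_integral_cong)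
    fix \<omega> assume "\<omega> \<in> space M"
    then have "(\<Sum>k. h \<omega> k * indicator (S k) \<omega>) = (\<Sum>k\<in>{X \<omega>}. h \<omega> k * indicator (S k) \<omega>)"
      by (intro suminf_finite) (auto simp: S_def)
    then show "h \<omega> (X \<omega>) = (\<Sum>k. h \<omega> k * indicator (S k) \<omega>)"
      using \<open>\<omega> \<in> space M\<close> by (simp add: S_def)
  qed
  also have "\<dots> = (\<Sum>k. \<integral>\<^sup>+\<omega>. h \<omega> k * indicator (S k) \<omega> \<partial>M)"
    using hM S by (intro nn_integral_suminf) auto
  also have "\<dots> = (\<Sum>k. \<integral>\<^sup>+\<omega>. h \<omega> k * pmf (P \<omega>) k \<partial>M)"
  proof (intro suminf_cong nn_integral_mult_eq_on_subalgebra[OF N _ _ _ h])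
    fix k B assume B: "B \<in> sets N"
    then have "B \<in> sets M" using N by (auto simp: subalgebra_def)
    then show "(\<integral>\<^sup>+\<omega>\<in>B. indicator (S k) \<omega> \<partial>M) = (\<integral>\<^sup>+\<omega>\<in>B. pmf (P \<omega>) k \<partial>M)"
      using S law[OF B] by (simp add: S_def Int_commute flip: indicator_inter_arith)
  qed (use S P in auto)
  also have "\<dots> = (\<integral>\<^sup>+\<omega>. (\<Sum>k. h \<omega> k * pmf (P \<omega>) k) \<partial>M)"
    using hM P by (intro nn_integral_suminf[symmetric]) auto
  also have "\<dots> = (\<integral>\<^sup>+\<omega>. (\<integral>\<^sup>+k. h \<omega> k \<partial>P \<omega>) \<partial>M)"
    by (simp add: nn_integral_measure_pmf nn_integral_count_space_nat mult.commute)
  finally show ?thesis .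
qed

lemma suminf_pmf_nat: "(\<Sum>k. ennreal (pmf (d :: nat pmf) k)) = 1"
  using nn_integral_pmf[where p = d and A = UNIV]
  by (simp add: nn_integral_count_space_nat measure_pmf.emeasure_space_1)

lemma emeasure_marginal_of_joint_pmf:
  fixes X :: "'i \<Rightarrow> 'a \<Rightarrow> nat" and P :: "'i \<Rightarrow> 'a \<Rightarrow> nat pmf"
  assumes I: "finite I" "x \<in> I" and B: "B \<in> sets M"
    and X: "\<And>i. i \<in> I \<Longrightarrow> X i \<in> measurable M (count_space UNIV)"
    and P: "\<And>i k. i \<in> I \<Longrightarrow> (\<lambda>\<omega>. pmf (P i \<omega>) k) \<in> borel_measurable M"
    and joint: "\<And>r. emeasure M (B \<inter> {\<omega>\<in>space M. \<forall>i\<in>I. X i \<omega> = r i}) =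
      (\<integral>\<^sup>+\<omega>\<in>B. (\<Prod>i\<in>I. ennreal (pmf (P i \<omega>) (r i))) \<partial>M)"
  shows "emeasure M (B \<inter> {\<omega>\<in>space M. X x \<omega> = k}) = (\<integral>\<^sup>+\<omega>\<in>B. pmf (P x \<omega>) k \<partial>M)"
proof -
  have "emeasure M (B \<inter> {\<omega>\<in>space M. \<forall>i\<in>I - D. X i \<omega> = r i}) =
      (\<integral>\<^sup>+\<omega>\<in>B. (\<Prod>i\<in>I - D. ennreal (pmf (P i \<omega>) (r i))) \<partial>M)"
    if "finite D" "D \<subseteq> I" for D r
    using that
  proof (induction D arbitrary: r rule: finite_induct)
    case empty
    show ?case using joint by simp
  next
    case (insert y D r)
    define E where "E k = B \<inter> {\<omega>\<in>space M. \<forall>i\<in>I - D. X i \<omega> = (r(y := k)) i}" for k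
    define \<rho> where "\<rho> \<omega> = (\<Prod>i\<in>I - insert y D. ennreal (pmf (P i \<omega>) (r i))) * indicator B \<omega>" for \<omega>
    have y: "y \<in> I - D" using insert by auto
    have "{\<omega>\<in>space M. X i \<omega> = c} \<in> sets M" if "i \<in> I" for i c
      using X[OF that] by measurable
    then have E: "E k \<in> sets M" for k
      unfolding E_def using B I by (intro sets.Int sets.sets_Collect_finite_All) auto
    have "B \<inter> {\<omega>\<in>space M. \<forall>i\<in>I - insert y D. X i \<omega> = r i} = (\<Union>k. E k)"
      using y by (auto simp: E_def)
    moreover have "disjoint_family E"
      using y by (auto simp: disjoint_family_on_def E_def)
    ultimately have "emeasure M (B \<inter> {\<omega>\<in>space M. \<forall>i\<in>I - insert y D. X i \<omega> = r i}) =
        (\<Sum>k. emeasure M (E k))"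
      using E by (simp add: suminf_emeasure image_subset_iff)
    also have "\<dots> = (\<Sum>k. \<integral>\<^sup>+\<omega>. pmf (P y \<omega>) k * \<rho> \<omega> \<partial>M)"
    proof (intro suminf_cong)
      fix k
      have "(\<Prod>i\<in>I - D. ennreal (pmf (P i \<omega>) ((r(y := k)) i))) =
          pmf (P y \<omega>) k * (\<Prod>i\<in>I - insert y D. ennreal (pmf (P i \<omega>) (r i)))" for \<omega>
        using y I
        by (simp add: prod.remove[of "I - D" y] Diff_insert[symmetric] cong: prod.cong_simp)
      then show "emeasure M (E k) = (\<integral>\<^sup>+\<omega>. pmf (P y \<omega>) k * \<rho> \<omega> \<partial>M)"
        using insert.IH[of "r(y := k)"] insert.prems by (simp add: E_def \<rho>_def mult.assoc)
    qed
    also have "\<dots> = (\<integral>\<^sup>+\<omega>. (\<Sum>k. ennreal (pmf (P y \<omega>) k)) * \<rho> \<omega> \<partial>M)"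
      using P y B unfolding \<rho>_def
      by (subst nn_integral_suminf[symmetric]) (auto intro!: borel_measurable_prod_ennreal)
    also have "\<dots> = (\<integral>\<^sup>+\<omega>\<in>B. (\<Prod>i\<in>I - insert y D. ennreal (pmf (P i \<omega>) (r i))) \<partial>M)"
      using suminf_pmf_nat by (simp add: \<rho>_def)
    finally show ?case .
  qed
  from this[of "I - {x}" "\<lambda>_. k"] show ?thesis
    using I by (simp add: Diff_Diff_Int)
qed

lemma (in finite_measure) measure_abs_sum_ge_orthogonal:
  fixes X :: "nat \<Rightarrow> 'a \<Rightarrow> real"
  assumes meas: "\<And>\<tau>. \<tau> < n \<Longrightarrow> X \<tau> \<in> borel_measurable M"
    and bdd: "\<And>\<tau>. \<tau> < n \<Longrightarrow> AE \<omega> in M. \<bar>X \<tau> \<omega>\<bar> \<le> b"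
    and orth: "\<And>\<sigma> \<tau>. \<sigma> < \<tau> \<Longrightarrow> \<tau> < n \<Longrightarrow> (\<integral>\<omega>. X \<sigma> \<omega> * X \<tau> \<omega> \<partial>M) = 0"
    and a: "0 < a"
  shows "measure M {\<omega>\<in>space M. a \<le> \<bar>\<Sum>\<tau><n. X \<tau> \<omega>\<bar>} \<le> (\<Sum>\<tau><n. \<integral>\<omega>. (X \<tau> \<omega>)\<^sup>2 \<partial>M) / a\<^sup>2"
proof -
  have int: "integrable M (\<lambda>\<omega>. X \<sigma> \<omega> * X \<tau> \<omega>)" if "\<sigma> < n" "\<tau> < n" for \<sigma> \<tau>
  proof (rule integrable_const_bound[where B = "b * b"])
    show "AE \<omega> in M. norm (X \<sigma> \<omega> * X \<tau> \<omega>) \<le> b * b"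
      using bdd[OF that(1)] bdd[OF that(2)]
      by eventually_elim (auto simp: abs_mult intro!: mult_mono)
  qed (use meas that in auto)
  have square_sum: "(\<Sum>\<tau><n. X \<tau> \<omega>)\<^sup>2 = (\<Sum>\<sigma><n. \<Sum>\<tau><n. X \<sigma> \<omega> * X \<tau> \<omega>)" for \<omega>
    by (simp add: power2_eq_square sum_product)
  have cross: "(\<integral>\<omega>. X \<sigma> \<omega> * X \<tau> \<omega> \<partial>M) = 0" if "\<sigma> < n" "\<tau> < n" "\<sigma> \<noteq> \<tau>" for \<sigma> \<tau>
    using that orth[of \<sigma> \<tau>] orth[of \<tau> \<sigma>] by (cases "\<sigma> < \<tau>") (auto simp: mult.commute)
  have "(\<integral>\<omega>. (\<Sum>\<tau><n. X \<tau> \<omega>)\<^sup>2 \<partial>M) = (\<Sum>\<sigma><n. \<Sum>\<tau><n. \<integral>\<omega>. X \<sigma> \<omega> * X \<tau> \<omega> \<partial>M)"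
    unfolding square_sum using int
    by (subst Bochner_Integration.integral_sum)
      (auto intro: sum.cong Bochner_Integration.integral_sum)
  also have "\<dots> = (\<Sum>\<sigma><n. \<integral>\<omega>. (X \<sigma> \<omega>)\<^sup>2 \<partial>M)"
    using cross by (intro sum.cong refl) (simp add: sum.remove[of "{..<n}"] power2_eq_square)
  finally have "(\<integral>\<omega>. (\<Sum>\<tau><n. X \<tau> \<omega>)\<^sup>2 \<partial>M) = (\<Sum>\<tau><n. \<integral>\<omega>. (X \<tau> \<omega>)\<^sup>2 \<partial>M)" .
  moreover have "integrable M (\<lambda>\<omega>. (\<Sum>\<tau><n. X \<tau> \<omega>)\<^sup>2)"
    unfolding square_sum using int by (auto intro!: Bochner_Integration.integrable_sum)
  ultimately show ?thesis
    using second_moment_method[of "\<lambda>\<omega>. \<Sum>\<tau><n. X \<tau> \<omega>" a] meas a by simp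
qed

lemma integral_eq_if_nn_integral_eq:
  fixes f g :: "'a \<Rightarrow> real"
  assumes "integrable M f" "integrable M g" "AE x in M. 0 \<le> f x" "AE x in M. 0 \<le> g x"
    and "(\<integral>\<^sup>+x. ennreal (f x) \<partial>M) = (\<integral>\<^sup>+x. ennreal (g x) \<partial>M)"
  shows "(\<integral>x. f x \<partial>M) = (\<integral>x. g x \<partial>M)"
  using assms by (simp add: nn_integral_eq_integral integral_nonneg_AE)

(* a, r and f count the arrivals, successful and attempted swaps of the pairs (i, j) up to
   time t, c the pairs generated at node j. *)
lemma sum_le_of_capacity_slack:
  fixes I :: "'i set" and a r f l :: "'i \<Rightarrow> real" and c p q e t :: real
  assumes I: "finite I" "I \<noteq> {}"
    and r_le_a: "\<And>i. i \<in> I \<Longrightarrow> r i \<le> a i"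
    and f_le_r: "\<And>i. i \<in> I \<Longrightarrow> q * f i < r i + e * t"
    and a_le: "\<And>i. i \<in> I \<Longrightarrow> a i \<le> t * (l i + e)"
    and q: "0 < q" "q \<le> 1" and t: "0 \<le> t" and e: "0 \<le> e"
    and slack: "(\<Sum>i\<in>I. l i + 3 * e) \<le> q * p"
    and c: "t * p - e * t < c"
  shows "(\<Sum>i\<in>I. a i - r i + f i) \<le> c"
proof -
  have "q * (a i - r i + f i) \<le> t * (l i + 3 * e) - e * t" if i: "i \<in> I" for i
  proof -
    have "q * (a i - r i + f i) \<le> q * a i + (1 - q) * r i + e * t"
      using f_le_r[OF i] by (simp add: algebra_simps)
    also have "\<dots> \<le> a i + e * t"
      using mult_left_mono[OF r_le_a[OF i], of "1 - q"] q by (simp add: algebra_simps)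
    finally show ?thesis using a_le[OF i] by (simp add: algebra_simps)
  qed
  then have "q * (\<Sum>i\<in>I. a i - r i + f i) \<le> (\<Sum>i\<in>I. t * (l i + 3 * e) - e * t)"
    by (simp add: sum_distrib_left sum_mono)
  also have "\<dots> = t * (\<Sum>i\<in>I. l i + 3 * e) - card I * (e * t)"
    by (simp add: sum_subtractf sum_distrib_left)
  also have "\<dots> \<le> t * (q * p) - q * (e * t)"
  proof -
    have "1 \<le> card I" using I by (simp add: Suc_le_eq card_gt_0_iff)
    then have "q \<le> card I" using q by linarith
    then have "q * (e * t) \<le> card I * (e * t)" using e t by (intro mult_right_mono) auto
    then show ?thesis using mult_left_mono[OF slack t] by linarith
  qed
  also have "\<dots> \<le> q * c"
    using mult_left_mono[OF less_imp_le[OF c], of q] q by (simp add: algebra_simps)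
  finally show ?thesis using q by simp
qed

lemma in_Lambda_column_sum_le:
  assumes "in_Lambda K p q l" "0 \<le> q" "j \<in> {1..K}"
  shows "(\<Sum>i\<in>{1..K}. l i j) \<le> q * p j"
proof -
  obtain f where f: "\<forall>j\<in>{1..K}. (\<Sum>i\<in>{1..K}. f i j) \<le> p j" "\<forall>i\<in>{1..K}. \<forall>j\<in>{1..K}. l i j \<le> q * f i j"
    using assms(1) unfolding in_Lambda_def by blast
  have "(\<Sum>i\<in>{1..K}. l i j) \<le> q * (\<Sum>i\<in>{1..K}. f i j)"
    using f(2) assms(3) by (simp add: sum_distrib_left) (intro sum_mono, auto)
  also have "\<dots> \<le> q * p j"
    using f(1) assms(2,3) by (simp add: mult_left_mono)
  finally show ?thesis .
qed

locale quantum_switch = prob_space M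
  for M :: "'a measure" and K :: nat and p :: "nat \<Rightarrow> real" and q :: real
    and C :: "nat \<Rightarrow> nat \<Rightarrow> 'a \<Rightarrow> nat" and A F R :: "'a pproc"
    and Filt :: "nat \<Rightarrow> 'a measure" +
  assumes q_pos: "0 < q" and q_le_1: "q \<le> 1"
    and p_nonneg: "i \<in> {1..K} \<Longrightarrow> 0 \<le> p i" and p_le_1: "i \<in> {1..K} \<Longrightarrow> p i \<le> 1"
    and subalgebra_Filt: "subalgebra M (Filt t)"
    and sets_Filt_mono: "s \<le> t \<Longrightarrow> sets (Filt s) \<subseteq> sets (Filt t)"
    and A_adapted: "i \<in> {1..K} \<Longrightarrow> j \<in> {1..K} \<Longrightarrow> A i j t \<in> Filt (Suc t) \<rightarrow>\<^sub>M count_space UNIV"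
    and R_adapted: "i \<in> {1..K} \<Longrightarrow> j \<in> {1..K} \<Longrightarrow> R i j t \<in> Filt (Suc t) \<rightarrow>\<^sub>M count_space UNIV"
    and F_adapted: "i \<in> {1..K} \<Longrightarrow> j \<in> {1..K} \<Longrightarrow> F i j t \<in> Filt t \<rightarrow>\<^sub>M count_space UNIV"
    and C_adapted: "i \<in> {1..K} \<Longrightarrow> C i t \<in> Filt (Suc t) \<rightarrow>\<^sub>M count_space UNIV"
    and R_sym: "i \<in> {1..K} \<Longrightarrow> j \<in> {1..K} \<Longrightarrow> \<omega> \<in> space M \<Longrightarrow> R i j t \<omega> = R j i t \<omega>"
    and F_sym: "i \<in> {1..K} \<Longrightarrow> j \<in> {1..K} \<Longrightarrow> \<omega> \<in> space M \<Longrightarrow> F i j t \<omega> = F j i t \<omega>"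
    and C_indep: "indep_vars (\<lambda>_. count_space UNIV) (\<lambda>(i, t). C i t) ({1..K} \<times> UNIV)"
    and C_le_1: "i \<in> {1..K} \<Longrightarrow> \<omega> \<in> space M \<Longrightarrow> C i t \<omega> \<le> 1"
    and prob_C_eq_1: "i \<in> {1..K} \<Longrightarrow> prob {\<omega>\<in>space M. C i t \<omega> = 1} = p i"
    and R_law: "B \<in> sets (Filt t) \<Longrightarrow>
      emeasure M (B \<inter> {\<omega>\<in>space M. \<forall>(i, j)\<in>pairs K. R i j t \<omega> = r i j}) =
      (\<integral>\<^sup>+\<omega>\<in>B. (\<Prod>(i, j)\<in>pairs K. ennreal (pmf (binomial_pmf (F i j t \<omega>) q) (r i j))) \<partial>M)"
    and on_demand: "\<omega> \<in> space M \<Longrightarrow>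
      on_demand K (\<lambda>j. E0 C F K j t \<omega>) (\<lambda>i j. Ureq A R i j t \<omega>) (\<lambda>i j. F i j t \<omega>)"
begin

lemma sets_Filt_subset: "B \<in> sets (Filt t) \<Longrightarrow> B \<in> events"
  using subalgebra_Filt[of t] by (auto simp: subalgebra_def)

lemma measurable_Filt_mono: "s \<le> t \<Longrightarrow> f \<in> Filt s \<rightarrow>\<^sub>M N \<Longrightarrow> f \<in> Filt t \<rightarrow>\<^sub>M N"
  using subalgebra_Filt[of s] subalgebra_Filt[of t] sets_Filt_mono[of s t]
  by (auto simp: subalgebra_def intro: measurable_mono[THEN subsetD])

lemmas measurable_Filt = measurable_from_subalg[OF subalgebra_Filt]

lemma F_measurable_Filt: "i \<in> {1..K} \<Longrightarrow> j \<in> {1..K} \<Longrightarrow> s \<le> t \<Longrightarrow> F i j s \<in> Filt t \<rightarrow>\<^sub>M count_space UNIV"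
  using measurable_Filt_mono F_adapted by blast

lemma R_measurable_Filt: "i \<in> {1..K} \<Longrightarrow> j \<in> {1..K} \<Longrightarrow> s < t \<Longrightarrow> R i j s \<in> Filt t \<rightarrow>\<^sub>M count_space UNIV"
  using measurable_Filt_mono[of "Suc s" t, OF _ R_adapted] by simp

lemma F_measurable: "i \<in> {1..K} \<Longrightarrow> j \<in> {1..K} \<Longrightarrow> F i j t \<in> M \<rightarrow>\<^sub>M count_space UNIV"
  using measurable_Filt F_adapted by blast

lemma R_measurable: "i \<in> {1..K} \<Longrightarrow> j \<in> {1..K} \<Longrightarrow> R i j t \<in> M \<rightarrow>\<^sub>M count_space UNIV"
  using measurable_Filt R_adapted by blast

lemma A_measurable: "i \<in> {1..K} \<Longrightarrow> j \<in> {1..K} \<Longrightarrow> A i j t \<in> M \<rightarrow>\<^sub>M count_space UNIV"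
  using measurable_Filt A_adapted by blast

lemma C_measurable: "i \<in> {1..K} \<Longrightarrow> C i t \<in> M \<rightarrow>\<^sub>M count_space UNIV"
  using measurable_Filt C_adapted by blast

lemma R_marginal:
  assumes i: "i \<in> {1..K}" and j: "j \<in> {1..K}" and B: "B \<in> sets (Filt t)"
  shows "emeasure M (B \<inter> {\<omega>\<in>space M. R i j t \<omega> = k}) =
    (\<integral>\<^sup>+\<omega>\<in>B. pmf (binomial_pmf (F i j t \<omega>) q) k \<partial>M)"
proof -
  have fin: "finite (pairs K)"
    by (rule finite_subset[of _ "{1..K} \<times> {1..K}"]) (auto simp: pairs_def)
  have pair_marginal: "emeasure M (B \<inter> {\<omega>\<in>space M. R (fst x) (snd x) t \<omega> = k}) =
      (\<integral>\<^sup>+\<omega>\<in>B. pmf (binomial_pmf (F (fst x) (snd x) t \<omega>) q) k \<partial>M)" if x: "x \<in> pairs K" for x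
  proof (rule emeasure_marginal_of_joint_pmf[OF fin x sets_Filt_subset[OF B]])
    show "emeasure M (B \<inter> {\<omega>\<in>space M. \<forall>x\<in>pairs K. R (fst x) (snd x) t \<omega> = r x}) =
        (\<integral>\<^sup>+\<omega>\<in>B. (\<Prod>x\<in>pairs K.
          ennreal (pmf (binomial_pmf (F (fst x) (snd x) t \<omega>) q) (r x))) \<partial>M)" for r
      using R_law[OF B, of "curry r"] by (simp add: case_prod_beta)
  qed (auto simp: pairs_def intro: R_measurable borel_measurable_count_space_comp[OF F_measurable])
  have "(i, j) \<in> pairs K \<or> (j, i) \<in> pairs K"
    using i j by (auto simp: pairs_def)
  moreover have "B \<inter> {\<omega>\<in>space M. R j i t \<omega> = k} = B \<inter> {\<omega>\<in>space M. R i j t \<omega> = k}"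
    using R_sym[OF i j] by auto
  moreover have "(\<integral>\<^sup>+\<omega>\<in>B. pmf (binomial_pmf (F j i t \<omega>) q) k \<partial>M) =
      (\<integral>\<^sup>+\<omega>\<in>B. pmf (binomial_pmf (F i j t \<omega>) q) k \<partial>M)"
    using F_sym[OF i j] by (intro nn_integral_cong) simp
  ultimately show ?thesis
    using pair_marginal[of "(i, j)"] pair_marginal[of "(j, i)"] by auto
qed

lemma nn_integral_R:
  assumes i: "i \<in> {1..K}" and j: "j \<in> {1..K}"
    and h: "\<And>k. (\<lambda>\<omega>. h \<omega> k) \<in> borel_measurable (Filt t)"
  shows "(\<integral>\<^sup>+\<omega>. h \<omega> (R i j t \<omega>) \<partial>M) = (\<integral>\<^sup>+\<omega>. (\<integral>\<^sup>+k. h \<omega> k \<partial>binomial_pmf (F i j t \<omega>) q) \<partial>M)"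
  by (rule nn_integral_conditional_pmf[OF subalgebra_Filt R_measurable[OF i j] _
        R_marginal[OF i j] h])
    (rule borel_measurable_count_space_comp[OF F_measurable[OF i j]])

lemma AE_R_le_F:
  assumes i: "i \<in> {1..K}" and j: "j \<in> {1..K}"
  shows "AE \<omega> in M. R i j t \<omega> \<le> F i j t \<omega>"
proof -
  define h where "h \<omega> k = (of_bool (F i j t \<omega> < k) :: ennreal)" for \<omega> k
  have h_Filt: "(\<lambda>\<omega>. h \<omega> k) \<in> borel_measurable (Filt t)" for k
    unfolding h_def
    by (rule borel_measurable_count_space_comp[OF F_measurable_Filt[OF i j order.refl]])
  have "F i j t \<in> borel_measurable M" "R i j t \<in> borel_measurable M"
    using F_measurable[OF i j] R_measurable[OF i j]
    by (simp_all add: measurable_cong_sets[OF refl sets_borel_eq_count_space])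
  then have h_R: "(\<lambda>\<omega>. h \<omega> (R i j t \<omega>)) \<in> borel_measurable M"
    unfolding h_def by measurable
  have "(\<integral>\<^sup>+k. h \<omega> k \<partial>binomial_pmf (F i j t \<omega>) q) = 0" for \<omega>
    using q_pos q_le_1
    by (subst nn_integral_0_iff_AE) (auto simp: AE_measure_pmf_iff h_def set_pmf_binomial_eq)
  then have "(\<integral>\<^sup>+\<omega>. h \<omega> (R i j t \<omega>) \<partial>M) = 0"
    using nn_integral_R[OF i j, where h = h, OF h_Filt] by simp
  then have "AE \<omega> in M. h \<omega> (R i j t \<omega>) = 0"
    using h_R by (simp add: nn_integral_0_iff_AE)
  then show ?thesis
    by eventually_elim (simp add: h_def)
qed

lemma nn_integral_mult_R:
  fixes Z :: "'a \<Rightarrow> real"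
  assumes i: "i \<in> {1..K}" and j: "j \<in> {1..K}"
    and Z: "Z \<in> borel_measurable (Filt t)" "\<And>\<omega>. 0 \<le> Z \<omega>"
  shows "(\<integral>\<^sup>+\<omega>. ennreal (Z \<omega> * R i j t \<omega>) \<partial>M) = (\<integral>\<^sup>+\<omega>. ennreal (Z \<omega> * (q * F i j t \<omega>)) \<partial>M)"
proof -
  have q: "q \<in> {0..1}" using q_pos q_le_1 by simp
  have "(\<lambda>\<omega>. ennreal (Z \<omega> * real k)) \<in> borel_measurable (Filt t)" for k
    using Z by measurable
  then have "(\<integral>\<^sup>+\<omega>. ennreal (Z \<omega> * R i j t \<omega>) \<partial>M) =
      (\<integral>\<^sup>+\<omega>. (\<integral>\<^sup>+k. ennreal (Z \<omega> * real k) \<partial>binomial_pmf (F i j t \<omega>) q) \<partial>M)"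
    by (rule nn_integral_R[OF i j])
  moreover have "(\<integral>\<^sup>+k. ennreal (Z \<omega> * real k) \<partial>binomial_pmf n q) = ennreal (Z \<omega> * (q * n))" for \<omega> n
    using Z q
    by (subst nn_integral_binomial_pmf_eq_expectation) (auto simp: expectation_binomial_pmf_real)
  ultimately show ?thesis
    by (simp only:)
qed

lemma nn_integral_R_minus_qF_square:
  assumes i: "i \<in> {1..K}" and j: "j \<in> {1..K}"
  shows "(\<integral>\<^sup>+\<omega>. ennreal ((real (R i j t \<omega>) - q * real (F i j t \<omega>))\<^sup>2) \<partial>M) =
    (\<integral>\<^sup>+\<omega>. ennreal (q * (1 - q) * F i j t \<omega>) \<partial>M)"
proof -
  have q: "q \<in> {0..1}" using q_pos q_le_1 by simp
  have "(\<lambda>\<omega>. ennreal ((real k - q * F i j t \<omega>)\<^sup>2)) \<in> borel_measurable (Filt t)" for k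
    by (rule borel_measurable_count_space_comp[OF F_measurable_Filt[OF i j order.refl]])
  then have "(\<integral>\<^sup>+\<omega>. ennreal ((real (R i j t \<omega>) - q * real (F i j t \<omega>))\<^sup>2) \<partial>M) =
      (\<integral>\<^sup>+\<omega>. (\<integral>\<^sup>+k. ennreal ((real k - q * F i j t \<omega>)\<^sup>2) \<partial>binomial_pmf (F i j t \<omega>) q) \<partial>M)"
    by (rule nn_integral_R[OF i j])
  moreover have "(\<integral>\<^sup>+k. ennreal ((real k - q * n)\<^sup>2) \<partial>binomial_pmf n q) =
      ennreal (q * (1 - q) * n)" for n
    using q expectation_binomial_pmf_centered_square[OF q, of n]
    by (simp add: nn_integral_binomial_pmf_eq_expectation mult.commute mult.left_commute)
  ultimately show ?thesis
    by (simp only:)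
qed

lemma swaps_le_stored: "\<omega> \<in> space M \<Longrightarrow> j \<in> {1..K} \<Longrightarrow> (\<Sum>i\<in>{1..K}. F i j t \<omega>) \<le> E0 C F K j t \<omega>"
  using on_demand by (simp add: on_demand_def)

lemma swaps_le_requests:
  "\<omega> \<in> space M \<Longrightarrow> i \<in> {1..K} \<Longrightarrow> j \<in> {1..K} \<Longrightarrow> F i j t \<omega> \<le> Ureq A R i j t \<omega>"
  using on_demand by (simp add: on_demand_def)

lemma E0_balance:
  assumes \<omega>: "\<omega> \<in> space M" and j: "j \<in> {1..K}"
  shows "E0 C F K j t \<omega> + (\<Sum>\<tau><t. \<Sum>i\<in>{1..K}. F i j \<tau> \<omega>) = (\<Sum>\<tau><t. C j \<tau> \<omega>)"
proof (induction t)
  case (Suc t)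
  have "(\<Sum>i\<in>{1..K}. F j i t \<omega>) = (\<Sum>i\<in>{1..K}. F i j t \<omega>)"
    using F_sym[OF _ j \<omega>] by (intro sum.cong) auto
  then show ?case
    using Suc swaps_le_stored[OF \<omega> j, of t] by simp
qed simp

lemma sum_C_le_time: "\<omega> \<in> space M \<Longrightarrow> j \<in> {1..K} \<Longrightarrow> (\<Sum>\<tau><t. C j \<tau> \<omega>) \<le> t"
  using sum_bounded_above[of "{..<t}" "\<lambda>\<tau>. C j \<tau> \<omega>" 1] C_le_1 by simp

lemma F_le_time:
  assumes \<omega>: "\<omega> \<in> space M" and i: "i \<in> {1..K}" and j: "j \<in> {1..K}"
  shows "F i j t \<omega> \<le> t"
proof -
  have "F i j t \<omega> \<le> (\<Sum>i\<in>{1..K}. F i j t \<omega>)"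
    using i by (intro member_le_sum) auto
  also have "\<dots> \<le> E0 C F K j t \<omega>"
    using swaps_le_stored[OF \<omega> j] .
  also have "\<dots> \<le> t"
    using E0_balance[OF \<omega> j, of t] sum_C_le_time[OF \<omega> j, of t] by linarith
  finally show ?thesis .
qed

lemma sum_F_le_time:
  assumes \<omega>: "\<omega> \<in> space M" and i: "i \<in> {1..K}" and j: "j \<in> {1..K}"
  shows "(\<Sum>\<tau><t. F i j \<tau> \<omega>) \<le> t"
proof -
  have "(\<Sum>\<tau><t. F i j \<tau> \<omega>) \<le> (\<Sum>\<tau><t. \<Sum>i\<in>{1..K}. F i j \<tau> \<omega>)"
    using i by (intro sum_mono member_le_sum) auto
  then show ?thesis
    using E0_balance[OF \<omega> j, of t] sum_C_le_time[OF \<omega> j, of t] by linarith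
qed

lemma Ureq_balance:
  assumes \<omega>: "\<omega> \<in> space M" and i: "i \<in> {1..K}" and j: "j \<in> {1..K}"
    and no_failure: "\<And>\<tau>. \<tau> < t \<Longrightarrow> R i j \<tau> \<omega> \<le> F i j \<tau> \<omega>"
  shows "Ureq A R i j t \<omega> + (\<Sum>\<tau><t. R i j \<tau> \<omega>) = (\<Sum>\<tau><t. A i j \<tau> \<omega>)"
proof -
  (* R <= F <= U: every successful swap serves a pending request, so no i-j pair is stored. *)
  have "Estore A R i j t \<omega> = 0 \<and> Ureq A R i j t \<omega> + (\<Sum>\<tau><t. R i j \<tau> \<omega>) = (\<Sum>\<tau><t. A i j \<tau> \<omega>)"
    using no_failure
  proof (induction t)
    case (Suc t)
    have "R i j t \<omega> \<le> Ureq A R i j t \<omega>"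
      using Suc.prems[of t] swaps_le_requests[OF \<omega> i j, of t] by simp
    then show ?case
      using Suc by (simp add: Estore_def Ureq_def)
  qed (simp add: Estore_def Ureq_def)
  then show ?thesis ..
qed

lemma integrable_F:
  assumes i: "i \<in> {1..K}" and j: "j \<in> {1..K}"
  shows "integrable M (\<lambda>\<omega>. real (F i j t \<omega>))"
proof (rule integrable_const_bound[where B = t])
  show "AE \<omega> in M. norm (real (F i j t \<omega>)) \<le> t"
    using F_le_time[OF _ i j] by (intro AE_I2) auto
qed (use F_measurable[OF i j] in measurable)

lemma AE_abs_R_minus_qF_le:
  assumes i: "i \<in> {1..K}" and j: "j \<in> {1..K}"
  shows "AE \<omega> in M. \<bar>real (R i j t \<omega>) - q * real (F i j t \<omega>)\<bar> \<le> t"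
  using AE_R_le_F[OF i j, of t] AE_space
proof eventually_elim
  case (elim \<omega>)
  have "q * real (F i j t \<omega>) \<le> real (F i j t \<omega>)"
    by (intro mult_left_le_one_le) (use q_pos q_le_1 in auto)
  moreover have "real (R i j t \<omega>) \<le> real (F i j t \<omega>)" "real (F i j t \<omega>) \<le> t"
    using elim F_le_time[OF elim(2) i j, of t] by auto
  moreover have "0 \<le> q * real (F i j t \<omega>)"
    using q_pos by simp
  ultimately show ?case
    by (simp add: abs_le_iff)
qed

lemma integral_mult_R:
  fixes Z :: "'a \<Rightarrow> real"
  assumes i: "i \<in> {1..K}" and j: "j \<in> {1..K}"
    and Z: "Z \<in> borel_measurable (Filt t)" "\<And>\<omega>. 0 \<le> Z \<omega>" and Z_bdd: "AE \<omega> in M. Z \<omega> \<le> b"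
  shows "integrable M (\<lambda>\<omega>. Z \<omega> * R i j t \<omega>)" "integrable M (\<lambda>\<omega>. Z \<omega> * (q * F i j t \<omega>))"
    and "(\<integral>\<omega>. Z \<omega> * R i j t \<omega> \<partial>M) = (\<integral>\<omega>. Z \<omega> * (q * F i j t \<omega>) \<partial>M)"
proof -
  note [measurable] = measurable_Filt[OF Z(1)] F_measurable[OF i j] R_measurable[OF i j]
  have "AE \<omega> in M. Z \<omega> * R i j t \<omega> \<le> b * t \<and> Z \<omega> * (q * F i j t \<omega>) \<le> b * t"
    using Z_bdd AE_R_le_F[OF i j, of t] AE_space
  proof eventually_elim
    case (elim \<omega>)
    have "real (R i j t \<omega>) \<le> t" "q * real (F i j t \<omega>) \<le> t"
      using elim F_le_time[OF elim(3) i j, of t] q_pos q_le_1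
      by (auto intro: order_trans[OF mult_left_le_one_le])
    then show ?case
      using elim(1) Z(2)[of \<omega>] q_pos by (auto intro: mult_mono)
  qed
  then show int: "integrable M (\<lambda>\<omega>. Z \<omega> * R i j t \<omega>)" "integrable M (\<lambda>\<omega>. Z \<omega> * (q * F i j t \<omega>))"
    using Z(2) q_pos by (auto intro!: integrable_const_bound[where B = "b * t"] elim!: AE_mp)
  show "(\<integral>\<omega>. Z \<omega> * R i j t \<omega> \<partial>M) = (\<integral>\<omega>. Z \<omega> * (q * F i j t \<omega>) \<partial>M)"
    using Z(2) q_pos
    by (intro integral_eq_if_nn_integral_eq[OF int _ _ nn_integral_mult_R[OF i j Z]]) auto
qed

lemma integral_R_minus_qF_orthogonal:
  fixes Y :: "'a \<Rightarrow> real"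
  assumes i: "i \<in> {1..K}" and j: "j \<in> {1..K}"
    and Y: "Y \<in> borel_measurable (Filt t)" and Y_bdd: "AE \<omega> in M. \<bar>Y \<omega>\<bar> \<le> b"
  shows "(\<integral>\<omega>. Y \<omega> * (real (R i j t \<omega>) - q * real (F i j t \<omega>)) \<partial>M) = 0"
proof -
  define Yp where "Yp \<omega> = max (Y \<omega>) 0" for \<omega>
  define Ym where "Ym \<omega> = max (- Y \<omega>) 0" for \<omega>
  have parts_Filt: "Yp \<in> borel_measurable (Filt t)" "Ym \<in> borel_measurable (Filt t)"
    unfolding Yp_def Ym_def using Y by measurable
  have nonneg: "0 \<le> Yp \<omega>" "0 \<le> Ym \<omega>" for \<omega>
    by (simp_all add: Yp_def Ym_def)
  have Yp_bdd: "AE \<omega> in M. Yp \<omega> \<le> b"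
    using Y_bdd by eventually_elim (auto simp: Yp_def)
  have Ym_bdd: "AE \<omega> in M. Ym \<omega> \<le> b"
    using Y_bdd by eventually_elim (auto simp: Ym_def)
  note Yp = integral_mult_R[OF i j parts_Filt(1) nonneg(1) Yp_bdd]
    and Ym = integral_mult_R[OF i j parts_Filt(2) nonneg(2) Ym_bdd]
  have "(\<integral>\<omega>. Y \<omega> * (real (R i j t \<omega>) - q * real (F i j t \<omega>)) \<partial>M) =
      (\<integral>\<omega>. (Yp \<omega> * R i j t \<omega> - Yp \<omega> * (q * F i j t \<omega>)) -
        (Ym \<omega> * R i j t \<omega> - Ym \<omega> * (q * F i j t \<omega>)) \<partial>M)"
    by (intro Bochner_Integration.integral_cong) (auto simp: Yp_def Ym_def max_def algebra_simps)
  also have "\<dots> = 0"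
    using Yp Ym by (simp add: Yp_def Ym_def)
  finally show ?thesis .
qed

lemma integral_R_minus_qF_square:
  assumes i: "i \<in> {1..K}" and j: "j \<in> {1..K}"
  shows "(\<integral>\<omega>. (real (R i j t \<omega>) - q * real (F i j t \<omega>))\<^sup>2 \<partial>M) =
    (\<integral>\<omega>. q * (1 - q) * real (F i j t \<omega>) \<partial>M)"
proof (rule integral_eq_if_nn_integral_eq[OF _ _ _ _ nn_integral_R_minus_qF_square[OF i j]])
  show "integrable M (\<lambda>\<omega>. (real (R i j t \<omega>) - q * real (F i j t \<omega>))\<^sup>2)"
  proof (rule integrable_const_bound[where B = "t\<^sup>2"])
    show "AE \<omega> in M. norm ((real (R i j t \<omega>) - q * real (F i j t \<omega>))\<^sup>2) \<le> t\<^sup>2"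
      using AE_abs_R_minus_qF_le[OF i j, of t]
      by eventually_elim (simp add: abs_le_square_iff[symmetric] del: abs_le_square_iff)
  qed (use F_measurable[OF i j] R_measurable[OF i j] in measurable)
  show "integrable M (\<lambda>\<omega>. q * (1 - q) * real (F i j t \<omega>))"
    using integrable_F[OF i j] by simp
qed (use q_pos q_le_1 in auto)

definition swap_deviation :: "nat \<Rightarrow> nat \<Rightarrow> nat \<Rightarrow> 'a \<Rightarrow> real" where
  "swap_deviation i j t \<omega> = (\<Sum>\<tau><t. real (R i j \<tau> \<omega>) - q * real (F i j \<tau> \<omega>))"

definition generation_deviation :: "nat \<Rightarrow> nat \<Rightarrow> 'a \<Rightarrow> real" where
  "generation_deviation j t \<omega> = (\<Sum>\<tau><t. real (C j \<tau> \<omega>) - p j)"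

definition deviation_event :: "real \<Rightarrow> nat \<Rightarrow> 'a set" where
  "deviation_event a t =
    (\<Union>(i, j)\<in>{1..K} \<times> {1..K}. {\<omega>\<in>space M. a \<le> \<bar>swap_deviation i j t \<omega>\<bar>}) \<union>
    (\<Union>j\<in>{1..K}. {\<omega>\<in>space M. a \<le> \<bar>generation_deviation j t \<omega>\<bar>})"

lemma swap_deviation_measurable:
  "i \<in> {1..K} \<Longrightarrow> j \<in> {1..K} \<Longrightarrow> swap_deviation i j t \<in> borel_measurable M"
  unfolding swap_deviation_def using F_measurable R_measurable by measurable

lemma generation_deviation_measurable: "j \<in> {1..K} \<Longrightarrow> generation_deviation j t \<in> borel_measurable M"
  unfolding generation_deviation_def using C_measurable by measurable

lemma prob_swap_deviation_ge:
  assumes i: "i \<in> {1..K}" and j: "j \<in> {1..K}" and a: "0 < a"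
  shows "prob {\<omega>\<in>space M. a \<le> \<bar>swap_deviation i j t \<omega>\<bar>} \<le> t / a\<^sup>2"
proof -
  define X where "X \<tau> \<omega> = real (R i j \<tau> \<omega>) - q * real (F i j \<tau> \<omega>)" for \<tau> \<omega>
  have X_Filt: "X \<sigma> \<in> borel_measurable (Filt \<tau>)" if "\<sigma> < \<tau>" for \<sigma> \<tau>
    unfolding X_def
    using R_measurable_Filt[OF i j that] F_measurable_Filt[OF i j less_imp_le[OF that]]
    by measurable
  have X_bdd: "AE \<omega> in M. \<bar>X \<tau> \<omega>\<bar> \<le> t" if "\<tau> < t" for \<tau>
    using AE_abs_R_minus_qF_le[OF i j, of \<tau>] unfolding X_def
    by eventually_elim (use that in \<open>meson less_imp_le of_nat_le_iff order_trans\<close>)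
  have "prob {\<omega>\<in>space M. a \<le> \<bar>swap_deviation i j t \<omega>\<bar>} \<le> (\<Sum>\<tau><t. \<integral>\<omega>. (X \<tau> \<omega>)\<^sup>2 \<partial>M) / a\<^sup>2"
    unfolding swap_deviation_def X_def[symmetric]
  proof (rule measure_abs_sum_ge_orthogonal[OF _ X_bdd _ a])
    show "X \<tau> \<in> borel_measurable M" for \<tau>
      using measurable_Filt[OF X_Filt[OF lessI]] .
    show "(\<integral>\<omega>. X \<sigma> \<omega> * X \<tau> \<omega> \<partial>M) = 0" if "\<sigma> < \<tau>" for \<sigma> \<tau>
      unfolding X_def[of \<tau>]
      using integral_R_minus_qF_orthogonal[OF i j X_Filt[OF that]]
        AE_abs_R_minus_qF_le[OF i j, of \<sigma>, folded X_def]
      by blast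
  qed
  also have "(\<Sum>\<tau><t. \<integral>\<omega>. (X \<tau> \<omega>)\<^sup>2 \<partial>M) = (\<integral>\<omega>. (\<Sum>\<tau><t. q * (1 - q) * real (F i j \<tau> \<omega>)) \<partial>M)"
    using integrable_F[OF i j]
    by (simp add: X_def integral_R_minus_qF_square[OF i j] Bochner_Integration.integral_sum)
  also have "\<dots> \<le> t"
  proof (rule integral_le_const)
    show "integrable M (\<lambda>\<omega>. \<Sum>\<tau><t. q * (1 - q) * real (F i j \<tau> \<omega>))"
      using integrable_F[OF i j] by auto
    have "q * (1 - q) * real (F i j \<tau> \<omega>) \<le> real (F i j \<tau> \<omega>)" for \<tau> \<omega>
      using q_pos q_le_1 by (intro mult_left_le_one_le) (auto simp: mult_le_one)
    then have "(\<Sum>\<tau><t. q * (1 - q) * real (F i j \<tau> \<omega>)) \<le> (\<Sum>\<tau><t. F i j \<tau> \<omega>)" for \<omega>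
      by (simp add: sum_mono)
    then show "AE \<omega> in M. (\<Sum>\<tau><t. q * (1 - q) * real (F i j \<tau> \<omega>)) \<le> t"
      using sum_F_le_time[OF _ i j, of _ t] by (intro AE_I2) (meson of_nat_le_iff order_trans)
  qed
  finally show ?thesis
    using a by (simp add: divide_right_mono)
qed

lemma abs_C_minus_p_le_1: "j \<in> {1..K} \<Longrightarrow> \<omega> \<in> space M \<Longrightarrow> \<bar>real (C j t \<omega>) - p j\<bar> \<le> 1"
  using C_le_1[of j \<omega> t] p_nonneg[of j] p_le_1[of j] by (cases "C j t \<omega>") auto

lemma integrable_C: "j \<in> {1..K} \<Longrightarrow> integrable M (\<lambda>\<omega>. real (C j t \<omega>))"
  using C_le_1 C_measurable[of j t]
  by (intro integrable_const_bound[where B = 1] AE_I2)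
    (auto intro: borel_measurable_count_space_comp)

lemma expectation_C: "j \<in> {1..K} \<Longrightarrow> expectation (\<lambda>\<omega>. real (C j t \<omega>)) = p j"
proof -
  assume j: "j \<in> {1..K}"
  have "real (C j t \<omega>) = indicator {\<omega>\<in>space M. C j t \<omega> = 1} \<omega>" if "\<omega> \<in> space M" for \<omega>
    using C_le_1[OF j that, of t] that by (cases "C j t \<omega>") auto
  then have "expectation (\<lambda>\<omega>. real (C j t \<omega>)) = prob {\<omega>\<in>space M. C j t \<omega> = 1}"
    by (simp add: Int_absorb2[OF Collect_subset] cong: Bochner_Integration.integral_cong)
  then show ?thesis
    using prob_C_eq_1[OF j] by simp
qed

lemma integral_C_minus_p_orthogonal:
  assumes j: "j \<in> {1..K}" and "\<sigma> \<noteq> \<tau>"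
  shows "(\<integral>\<omega>. (real (C j \<sigma> \<omega>) - p j) * (real (C j \<tau> \<omega>) - p j) \<partial>M) = 0"
proof -
  let ?X = "\<lambda>x \<omega>. real ((\<lambda>(i, \<tau>). C i \<tau>) x \<omega>) - p (fst x)"
  have "indep_vars (\<lambda>_. borel) ?X ({1..K} \<times> UNIV)"
    by (rule indep_vars_compose2[OF C_indep]) auto
  then have indep: "indep_vars (\<lambda>_. borel) ?X {(j, \<sigma>), (j, \<tau>)}"
    by (rule indep_vars_subset) (use j in auto)
  have "(\<integral>\<omega>. (\<Prod>x\<in>{(j, \<sigma>), (j, \<tau>)}. ?X x \<omega>) \<partial>M) = (\<Prod>x\<in>{(j, \<sigma>), (j, \<tau>)}. \<integral>\<omega>. ?X x \<omega> \<partial>M)"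
    by (rule indep_vars_lebesgue_integral[OF _ indep]) (use integrable_C[OF j] in auto)
  moreover have "(\<integral>\<omega>. real (C j \<tau> \<omega>) - p j \<partial>M) = 0"
    using integrable_C[OF j] expectation_C[OF j] by (simp add: prob_space)
  ultimately show ?thesis
    using \<open>\<sigma> \<noteq> \<tau>\<close> by simp
qed

lemma prob_generation_deviation_ge:
  assumes j: "j \<in> {1..K}" and a: "0 < a"
  shows "prob {\<omega>\<in>space M. a \<le> \<bar>generation_deviation j t \<omega>\<bar>} \<le> t / a\<^sup>2"
proof -
  define X where "X \<tau> \<omega> = real (C j \<tau> \<omega>) - p j" for \<tau> \<omega>
  have X_M: "X \<tau> \<in> borel_measurable M" for \<tau>
    unfolding X_def using C_measurable[OF j] by measurable
  have "prob {\<omega>\<in>space M. a \<le> \<bar>generation_deviation j t \<omega>\<bar>} \<le> (\<Sum>\<tau><t. \<integral>\<omega>. (X \<tau> \<omega>)\<^sup>2 \<partial>M) / a\<^sup>2"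
    unfolding generation_deviation_def X_def[symmetric]
  proof (rule measure_abs_sum_ge_orthogonal[OF X_M _ _ a])
    show "AE \<omega> in M. \<bar>X \<tau> \<omega>\<bar> \<le> 1" for \<tau>
      unfolding X_def using abs_C_minus_p_le_1[OF j] by (intro AE_I2) auto
    show "(\<integral>\<omega>. X \<sigma> \<omega> * X \<tau> \<omega> \<partial>M) = 0" if "\<sigma> < \<tau>" for \<sigma> \<tau>
      unfolding X_def using integral_C_minus_p_orthogonal[OF j] that by simp
  qed
  also have "(\<integral>\<omega>. (X \<tau> \<omega>)\<^sup>2 \<partial>M) \<le> 1" for \<tau>
  proof (rule integral_le_const)
    show "integrable M (\<lambda>\<omega>. (X \<tau> \<omega>)\<^sup>2)"
      unfolding X_def using abs_C_minus_p_le_1[OF j] X_M[unfolded X_def]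
      by (intro integrable_const_bound[where B = 1] AE_I2) (auto simp: abs_square_le_1)
  qed (use abs_C_minus_p_le_1[OF j] in \<open>auto simp: X_def abs_square_le_1\<close>)
  then have "(\<Sum>\<tau><t. \<integral>\<omega>. (X \<tau> \<omega>)\<^sup>2 \<partial>M) \<le> t"
    using sum_mono[of "{..<t}" "\<lambda>\<tau>. \<integral>\<omega>. (X \<tau> \<omega>)\<^sup>2 \<partial>M" "\<lambda>_. 1"] by simp
  finally show ?thesis
    using a by (simp add: divide_right_mono)
qed

lemma deviation_event_sets: "deviation_event a t \<in> events"
  unfolding deviation_event_def
  using swap_deviation_measurable generation_deviation_measurable
  by (intro sets.Un sets.finite_UN) (auto simp: case_prod_beta)

lemma prob_deviation_event:
  assumes a: "0 < a"
  shows "prob (deviation_event a t) \<le> real (K * K + K) * t / a\<^sup>2"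
proof -
  let ?S = "\<lambda>(i, j). {\<omega>\<in>space M. a \<le> \<bar>swap_deviation i j t \<omega>\<bar>}"
  let ?G = "\<lambda>j. {\<omega>\<in>space M. a \<le> \<bar>generation_deviation j t \<omega>\<bar>}"
  have S_sets: "?S x \<in> events" if "x \<in> {1..K} \<times> {1..K}" for x
    using that swap_deviation_measurable by (auto simp: case_prod_beta)
  have G_sets: "?G j \<in> events" if "j \<in> {1..K}" for j
    using that generation_deviation_measurable by auto
  have "prob (deviation_event a t) \<le> prob (\<Union>x\<in>{1..K} \<times> {1..K}. ?S x) + prob (\<Union>j\<in>{1..K}. ?G j)"
    unfolding deviation_event_def using S_sets G_sets
    by (intro measure_Un_le) auto
  also have "\<dots> \<le> (\<Sum>x\<in>{1..K} \<times> {1..K}. prob (?S x)) + (\<Sum>j\<in>{1..K}. prob (?G j))"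
    using S_sets G_sets by (intro add_mono finite_measure_subadditive_finite) auto
  also have "\<dots> \<le> (\<Sum>x\<in>{1..K} \<times> {1..K}. t / a\<^sup>2) + (\<Sum>j\<in>{1..K}. t / a\<^sup>2)"
    using prob_swap_deviation_ge[OF _ _ a] prob_generation_deviation_ge[OF _ a]
    by (intro add_mono sum_mono) (auto simp: case_prod_beta)
  also have "\<dots> = real (K * K + K) * t / a\<^sup>2"
    by (simp add: card_cartesian_product add_divide_distrib algebra_simps)
  finally show ?thesis .
qed

lemma S_event_if_no_deviation:
  fixes lam :: "nat \<Rightarrow> nat \<Rightarrow> real" and e :: real
  assumes \<omega>: "\<omega> \<in> space M" and e: "0 \<le> e"
    and slack: "\<And>j. j \<in> {1..K} \<Longrightarrow> (\<Sum>i\<in>{1..K}. lam i j + 3 * e) \<le> q * p j"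
    and no_failure: "\<And>i j \<tau>. i \<in> {1..K} \<Longrightarrow> j \<in> {1..K} \<Longrightarrow> \<tau> < t \<Longrightarrow> R i j \<tau> \<omega> \<le> F i j \<tau> \<omega>"
    and arrivals: "\<And>i j. i \<in> {1..K} \<Longrightarrow> j \<in> {1..K} \<Longrightarrow> (\<Sum>\<tau><t. real (A i j \<tau> \<omega>)) \<le> t * (lam i j + e)"
    and no_deviation: "\<omega> \<notin> deviation_event (e * t) t"
  shows "\<omega> \<in> S_event M K A R C F t"
  unfolding S_event_def
proof (intro CollectI conjI ballI \<omega>)
  fix j assume j: "j \<in> {1..K}"
  define a where "a i = (\<Sum>\<tau><t. real (A i j \<tau> \<omega>))" for i
  define r where "r i = (\<Sum>\<tau><t. real (R i j \<tau> \<omega>))" for i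
  define f where "f i = (\<Sum>\<tau><t. real (F i j \<tau> \<omega>))" for i
  define c where "c = (\<Sum>\<tau><t. real (C j \<tau> \<omega>))"
  have U: "real (Ureq A R i j t \<omega>) = a i - r i" if i: "i \<in> {1..K}" for i
    using Ureq_balance[OF \<omega> i j no_failure[OF i j]] unfolding a_def r_def
    by (metis add_diff_cancel_right' of_nat_add of_nat_sum)
  have "(\<Sum>i\<in>{1..K}. a i - r i + f i) \<le> c"
  proof (rule sum_le_of_capacity_slack[OF _ _ _ _ _ q_pos q_le_1 _ e slack[OF j]])
    show "r i \<le> a i" if "i \<in> {1..K}" for i
      using U[OF that] by simp
    show "q * f i < r i + e * t" if i: "i \<in> {1..K}" for i
    proof -
      have "\<bar>swap_deviation i j t \<omega>\<bar> < e * t"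
        using no_deviation i j \<omega> by (auto simp: deviation_event_def not_le)
      then show ?thesis
        by (simp add: swap_deviation_def r_def f_def sum_subtractf sum_distrib_left abs_less_iff)
    qed
    show "t * p j - e * t < c"
    proof -
      have "\<bar>generation_deviation j t \<omega>\<bar> < e * t"
        using no_deviation j \<omega> by (auto simp: deviation_event_def not_le)
      then show ?thesis
        by (simp add: generation_deviation_def c_def sum_subtractf abs_less_iff)
    qed
  qed (use j arrivals[OF _ j] in \<open>auto simp: a_def\<close>)
  moreover have "real (E0 C F K j t \<omega>) = c - (\<Sum>i\<in>{1..K}. f i)"
    using E0_balance[OF \<omega> j, of t] unfolding c_def f_def
    by (simp flip: of_nat_sum of_nat_add add: sum.swap[of _ "{..<t}"])
  ultimately have "(\<Sum>i\<in>{1..K}. real (Ureq A R i j t \<omega>)) \<le> real (E0 C F K j t \<omega>)"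
    using U by (simp add: sum.distrib sum_subtractf)
  then show "(\<Sum>i\<in>{1..K}. Ureq A R i j t \<omega>) \<le> E0 C F K j t \<omega>"
    by (simp flip: of_nat_sum)
qed

lemma set_nn_integral_arrivals_outside_S_event:
  fixes lam :: "nat \<Rightarrow> nat \<Rightarrow> real" and e L :: real
  assumes e: "0 < e" and t: "1 \<le> t" and i: "i \<in> {1..K}" and j: "j \<in> {1..K}"
    and slack: "\<And>j. j \<in> {1..K} \<Longrightarrow> (\<Sum>i\<in>{1..K}. lam i j + 3 * e) \<le> q * p j"
    and L: "0 \<le> L" "lam i j \<le> L"
  shows "(\<integral>\<^sup>+\<omega>\<in>space M - S_event M K A R C F t. ennreal (\<Sum>\<tau><t. real (A i j \<tau> \<omega>)) \<partial>M) \<le>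
    (\<integral>\<^sup>+\<omega>\<in>B1 M K A lam t e. ennreal (\<Sum>\<tau><t. real (A i j \<tau> \<omega>)) \<partial>M) +
    ennreal ((L + e) * real (K * K + K) / e\<^sup>2)"
proof -
  define a where "a \<omega> = ennreal (\<Sum>\<tau><t. real (A i j \<tau> \<omega>))" for \<omega>
  define B where "B = B1 M K A lam t e"
  define D where "D = deviation_event (e * t) t"
  have a_M: "a \<in> borel_measurable M"
    using A_measurable[OF i j] unfolding a_def by measurable
  have B_sets: "B \<in> events"
    unfolding B_def B1_def using A_measurable by measurable
  have "AE \<omega> in M. \<forall>i\<in>{1..K}. \<forall>j\<in>{1..K}. \<forall>\<tau>\<in>{..<t}. R i j \<tau> \<omega> \<le> F i j \<tau> \<omega>"
    using AE_R_le_F by (simp add: AE_finite_all)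
  then have "AE \<omega> in M. a \<omega> * indicator (space M - S_event M K A R C F t) \<omega> \<le>
      a \<omega> * indicator B \<omega> + ennreal (t * (L + e)) * indicator D \<omega>"
    using AE_space
  proof eventually_elim
    case (elim \<omega>)
    show ?case
    proof (cases "\<omega> \<in> S_event M K A R C F t \<or> \<omega> \<in> B")
      case False
      have arrivals: "(\<Sum>\<tau><t. real (A i j \<tau> \<omega>)) \<le> t * (lam i j + e)"
        if "i \<in> {1..K}" "j \<in> {1..K}" for i j
      proof -
        have "\<bar>(\<Sum>\<tau><t. real (A i j \<tau> \<omega>)) / t - lam i j\<bar> \<le> e"
          using False elim(2) that unfolding B_def B1_def by (auto simp: not_less)
        then have "(\<Sum>\<tau><t. real (A i j \<tau> \<omega>)) / t \<le> lam i j + e"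
          by (simp add: abs_le_iff)
        then show ?thesis
          using t by (simp add: divide_le_eq mult.commute)
      qed
      have "\<omega> \<in> D"
        using S_event_if_no_deviation[OF elim(2) _ slack _ arrivals] False e elim(1)
        unfolding D_def by (auto simp: mult.commute)
      moreover have "a \<omega> \<le> ennreal (t * (L + e))"
        unfolding a_def using arrivals[OF i j] mult_left_mono[of "lam i j + e" "L + e" t] L(2)
        by (intro ennreal_leI) simp
      ultimately show ?thesis
        using False elim(2) by simp
    qed (auto split: split_indicator)
  qed
  then have "(\<integral>\<^sup>+\<omega>\<in>space M - S_event M K A R C F t. a \<omega> \<partial>M) \<le>
      (\<integral>\<^sup>+\<omega>. a \<omega> * indicator B \<omega> + ennreal (t * (L + e)) * indicator D \<omega> \<partial>M)"
    by (rule nn_integral_mono_AE)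
  also have "\<dots> = (\<integral>\<^sup>+\<omega>\<in>B. a \<omega> \<partial>M) + ennreal (t * (L + e)) * emeasure M D"
    using a_M B_sets deviation_event_sets
    by (simp add: nn_integral_add nn_integral_cmult_indicator D_def)
  also have "\<dots> \<le> (\<integral>\<^sup>+\<omega>\<in>B. a \<omega> \<partial>M) +
      ennreal (t * (L + e)) * ennreal (real (K * K + K) * t / (e * t)\<^sup>2)"
    using prob_deviation_event[of "e * t" t] e t
    by (intro add_left_mono mult_left_mono) (simp_all add: emeasure_eq_measure D_def)
  also have "ennreal (t * (L + e)) * ennreal (real (K * K + K) * t / (e * t)\<^sup>2) =
      ennreal ((L + e) * real (K * K + K) / e\<^sup>2)"
  proof -
    have "t * (L + e) * (real (K * K + K) * t / (e * t)\<^sup>2) = (L + e) * real (K * K + K) / e\<^sup>2"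
      using e t by (simp add: field_simps power2_eq_square)
    then show ?thesis
      using e L by (subst ennreal_mult[symmetric]) simp_all
  qed
  finally show ?thesis
    unfolding a_def B_def .
qed

end

theorem lemma4:
  fixes M :: "'a measure" and K :: nat and p :: "nat \<Rightarrow> real" and q eps Amax :: real
    and lam :: "nat \<Rightarrow> nat \<Rightarrow> real"
    and C :: "nat \<Rightarrow> nat \<Rightarrow> 'a \<Rightarrow> nat" and A F R :: "'a pproc"
    and Filt :: "nat \<Rightarrow> 'a measure"
  assumes prob: "prob_space M"
    and q: "0 < q" "q \<le> 1"
    and p: "\<forall>i\<in>{1..K}. 0 \<le> p i \<and> p i \<le> 1"
    \<comment> \<open>filtration: information available at the start of slot t\<close>
    and filt_sub: "\<forall>t. subalgebra M (Filt t)"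
    and filt_mono: "\<forall>s t. s \<le> t \<longrightarrow> sets (Filt s) \<subseteq> sets (Filt t)"
    and adapt: "\<forall>t. \<forall>i\<in>{1..K}. \<forall>j\<in>{1..K}.
        A i j t \<in> measurable (Filt (Suc t)) (count_space UNIV) \<and>
        R i j t \<in> measurable (Filt (Suc t)) (count_space UNIV) \<and>
        F i j t \<in> measurable (Filt t) (count_space UNIV)"
    and adaptC: "\<forall>t. \<forall>i\<in>{1..K}. C i t \<in> measurable (Filt (Suc t)) (count_space UNIV)"
    \<comment> \<open>symmetry of pair-indexed quantities\<close>
    and sym: "\<forall>t. \<forall>i\<in>{1..K}. \<forall>j\<in>{1..K}. \<forall>\<omega>\<in>space M.
        A i j t \<omega> = A j i t \<omega> \<and> R i j t \<omega> = R j i t \<omega> \<and> F i j t \<omega> = F j i t \<omega>"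
    \<comment> \<open>(i) generation: mutually independent Bernoulli(p_i) variables, i.i.d. in t\<close>
    and C_indep: "prob_space.indep_vars M (\<lambda>_. count_space UNIV) (\<lambda>(i, t). C i t) ({1..K} \<times> UNIV)"
    and C_bern: "\<forall>i\<in>{1..K}. \<forall>t. (\<forall>\<omega>\<in>space M. C i t \<omega> \<le> 1) \<and>
        measure M {\<omega>\<in>space M. C i t \<omega> = 1} = p i"
    \<comment> \<open>(ii) swaps: given the past, successes are independent Binomial(F_ij(t), q) over pairs\<close>
    and R_law: "\<forall>t. \<forall>B\<in>sets (Filt t). \<forall>r :: nat \<Rightarrow> nat \<Rightarrow> nat.
        emeasure M (B \<inter> {\<omega>\<in>space M. \<forall>(i, j)\<in>pairs K. R i j t \<omega> = r i j}) =
        (\<integral>\<^sup>+\<omega>\<in>B. (\<Prod>(i, j)\<in>pairs K. ennreal (pmf (binomial_pmf (F i j t \<omega>) q) (r i j))) \<partial>M)"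
    \<comment> \<open>(iii) requests\<close>
    and A_indep: "prob_space.indep_vars M (\<lambda>_. seq_space) (\<lambda>(i, j) \<omega> t. A i j t \<omega>) (pairs K)"
    and A_stat: "\<forall>(i, j)\<in>pairs K. stationary_proc M (\<lambda>t. A i j t) \<and> ergodic_proc M (\<lambda>t. A i j t)"
    and A_rate: "\<forall>i\<in>{1..K}. \<forall>j\<in>{1..K}. 0 \<le> lam i j \<and>
        (\<integral>\<^sup>+\<omega>. ennreal (real (A i j 0 \<omega>)) \<partial>M) = ennreal (lam i j)"
    and A_mom: "\<forall>t. \<forall>i\<in>{1..K}. \<forall>j\<in>{1..K}. \<forall>h.
        (\<integral>\<^sup>+\<omega>\<in>{\<omega>\<in>space M. hist K A R C t \<omega> = h}. ennreal ((real (A i j t \<omega>))\<^sup>2) \<partial>M)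
          \<le> ennreal (Amax\<^sup>2) * emeasure M {\<omega>\<in>space M. hist K A R C t \<omega> = h}"
    \<comment> \<open>rates with slack in the capacity region\<close>
    and eps: "eps > 0"
    and Lam: "in_Lambda K p q (\<lambda>i j. lam i j + eps)"
    \<comment> \<open>Assumption 1\<close>
    and assm1: "\<forall>e' > 0. \<exists>c1. \<forall>t \<ge> 1. \<forall>i\<in>{1..K}. \<forall>j\<in>{1..K}.
        (\<integral>\<^sup>+\<omega>\<in>B1 M K A lam t e'. ennreal (\<Sum>\<tau><t. real (A i j \<tau> \<omega>)) \<partial>M) \<le> ennreal c1"
    \<comment> \<open>on-demand protocol\<close>
    and ondemand: "\<forall>t. \<forall>\<omega>\<in>space M.
        on_demand K (\<lambda>j. E0 C F K j t \<omega>) (\<lambda>i j. Ureq A R i j t \<omega>) (\<lambda>i j. F i j t \<omega>)"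
  shows "\<exists>c2. \<forall>t \<ge> 1. \<forall>i\<in>{1..K}. \<forall>j\<in>{1..K}.
    (\<integral>\<^sup>+\<omega>\<in>(space M - S_event M K A R C F t). ennreal (\<Sum>\<tau><t. real (A i j \<tau> \<omega>)) \<partial>M)
      \<le> ennreal c2"
proof -
  interpret quantum_switch M K p q C A F R Filt
    by (intro quantum_switch.intro quantum_switch_axioms.intro prob)
      (use q p filt_sub filt_mono adapt adaptC sym C_indep C_bern R_law ondemand in auto)
  (* The slack eps is shared by the arrival, swap and generation fluctuations. *)
  define e where "e = eps / 3"
  have e: "0 < e"
    using eps by (simp add: e_def)
  obtain c1 where c1: "\<forall>t \<ge> 1. \<forall>i\<in>{1..K}. \<forall>j\<in>{1..K}.
      (\<integral>\<^sup>+\<omega>\<in>B1 M K A lam t e. ennreal (\<Sum>\<tau><t. real (A i j \<tau> \<omega>)) \<partial>M) \<le> ennreal c1"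
    using assm1 e by blast
  have slack: "(\<Sum>i\<in>{1..K}. lam i j + 3 * e) \<le> q * p j" if "j \<in> {1..K}" for j
    using in_Lambda_column_sum_le[OF Lam _ that] q by (simp add: e_def)
  define L where "L = Max (insert 0 ((\<lambda>(i, j). lam i j) ` ({1..K} \<times> {1..K})))"
  have L_nonneg: "0 \<le> L"
    unfolding L_def by (intro Max_ge) auto
  have lam_le_L: "lam i j \<le> L" if "i \<in> {1..K}" "j \<in> {1..K}" for i j
    unfolding L_def using that by (intro Max_ge) (auto intro: rev_image_eqI[of "(i, j)"])
  define c2 where "c2 = max c1 0 + (L + e) * real (K * K + K) / e\<^sup>2"
  have "ennreal c1 + ennreal ((L + e) * real (K * K + K) / e\<^sup>2) \<le> ennreal c2"
    using L_nonneg e by (simp add: c2_def ennreal_plus ennreal_leI add_right_mono)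
  then show ?thesis
    using set_nn_integral_arrivals_outside_S_event[OF e _ _ _ slack L_nonneg lam_le_L] c1
    by (intro exI[of _ c2] allI impI ballI) (meson add_right_mono order_trans)
qed

end
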